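(* Let $G$ be an undirected, weighted, connected graph on vertices $1,\dots,n$, and let $H$ be either its adjacency matrix or its Laplacian matrix, with eigenvalues $\lambda_1\le\cdots\le\lambda_n$. For real $t$ let $p(t)=|\langle s|e^{itH}|r\rangle|^2$ be the fidelity of state transfer from a sender vertex $s$ to a receiver vertex $r$, and suppose $p(t_0)=1$. Let $h\in\mathbb{R}$ satisfy $|h|<\frac{\pi}{\lambda_n-\lambda_1}$. Then \[ p(t_0+h)\ \ge\ 1-h^2\left(\langle s|H^2|s\rangle-\left(\langle s|H|s\rangle\right)^2\right). \]
   Context: For a weighted graph with edge weights $w(j,k)$, the adjacency matrix $A=[a_{jk}]$ has $a_{jk}=w(j,k)$ if $j,k$ are adjacent and $a_{jk}=0$ otherwise; the Laplacian is $L=R-A$ where $R$ is the diagonal matrix of row sums of $A$. $\{|1\rangle,\dots,|n\rangle\}$ is the standard basis of $\mathbb{C}^n$, so $\langle j|M|k\rangle$ is the $(j,k)$ entry of a matrix $M$. *)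

theory Defs
  imports "HOL-Analysis.Analysis"
begin

definition weighted_graph :: "('n \<Rightarrow> 'n \<Rightarrow> bool) \<Rightarrow> ('n \<Rightarrow> 'n \<Rightarrow> real) \<Rightarrow> bool" where
  "weighted_graph E w \<longleftrightarrow>
     (\<forall>j k. E j k \<longrightarrow> E k j) \<and> (\<forall>j. \<not> E j j) \<and>
     (\<forall>j k. w j k = w k j) \<and> (\<forall>j k. E j k \<longrightarrow> w j k > 0)"

definition connected_graph :: "('n \<Rightarrow> 'n \<Rightarrow> bool) \<Rightarrow> bool" where
  "connected_graph E \<longleftrightarrow> (\<forall>j k. E\<^sup>*\<^sup>* j k)"

definition adjacency_matrix ::
  "('n::finite \<Rightarrow> 'n \<Rightarrow> bool) \<Rightarrow> ('n \<Rightarrow> 'n \<Rightarrow> real) \<Rightarrow> real ^'n ^'n" where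
  "adjacency_matrix E w = (\<chi> j k. if E j k then w j k else 0)"

definition laplacian_matrix ::
  "('n::finite \<Rightarrow> 'n \<Rightarrow> bool) \<Rightarrow> ('n \<Rightarrow> 'n \<Rightarrow> real) \<Rightarrow> real ^'n ^'n" where
  "laplacian_matrix E w =
     (\<chi> j k. (if j = k then (\<Sum>l\<in>UNIV. adjacency_matrix E w $ j $ l) else 0)
              - adjacency_matrix E w $ j $ k)"

definition eigenvalues :: "real ^'n ^'n \<Rightarrow> real set" where
  "eigenvalues M = {c. \<exists>v. v \<noteq> 0 \<and> M *v v = c *\<^sub>R v}"

primrec mat_pow :: "'a::{semiring_1} ^'n::finite ^'n \<Rightarrow> nat \<Rightarrow> 'a ^'n ^'n" where
  "mat_pow M 0 = mat 1"
| "mat_pow M (Suc m) = M ** mat_pow M m"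

definition mat_exp :: "complex ^'n::finite ^'n \<Rightarrow> complex ^'n ^'n" where
  "mat_exp M = (\<chi> j k. \<Sum>m. mat_pow M m $ j $ k / of_nat (fact m))"

definition fidelity :: "real ^'n::finite ^'n \<Rightarrow> 'n \<Rightarrow> 'n \<Rightarrow> real \<Rightarrow> real" where
  "fidelity H s r t =
     (cmod (mat_exp (\<chi> j k. \<i> * complex_of_real t * complex_of_real (H $ j $ k)) $ s $ r))\<^sup>2"

end

theory Submission
  imports Defs
begin

text \<open>Diagonalise the symmetric matrix as H = P diag(\<lambda>) P^T, so that
  <s|e^{itH}|r> = \<Sum>_i a_i b_i e^{it\<lambda>_i} with the unit vectors a, b given by rows s and r of P.
  Perfect transfer at t0 is the equality case of Cauchy-Schwarz, which forces
  b_i e^{it0\<lambda>_i} = \<omega> a_i for a phase \<omega>; hence p(t0 + h) = |\<Sum>_i a_i^2 e^{ih\<lambda>_i}|^2 is the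
  return probability of s at time h. The weights a_i^2 form the spectral measure of s, with mean
  <s|H|s> and variance V = <s|H^2|s> - <s|H|s>^2; centring the phases at the mean and using
  cos x \<ge> 1 - x^2/2 bounds the modulus below by 1 - h^2 V/2, and squaring gives 1 - h^2 V.\<close>

definition self_adjoint :: "('a::real_inner \<Rightarrow> 'a) \<Rightarrow> bool" where
  "self_adjoint f \<longleftrightarrow> (\<forall>x y. inner (f x) y = inner x (f y))"

lemma nonpos_if_linear_le_quadratic:
  fixes a C :: real
  assumes "\<And>e. e * a \<le> e\<^sup>2 * C"
  shows "a \<le> 0"
proof (rule ccontr)
  assume "\<not> a \<le> 0"
  define e where "e = a / (2 * (\<bar>C\<bar> + 1))"
  have e_pos: "e > 0" and e_small: "e * (\<bar>C\<bar> + 1) < a"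
    using \<open>\<not> a \<le> 0\<close> by (simp_all add: e_def field_simps add_pos_nonneg)
  have "e * a \<le> e * (e * \<bar>C\<bar>)"
    using assms[of e] e_pos by (smt (verit) mult_left_mono power2_eq_square abs_ge_self mult.assoc)
  then have "a \<le> e * \<bar>C\<bar>" using e_pos by simp
  with e_small e_pos show False by (simp add: algebra_simps)
qed

text \<open>Perturbing the maximiser x along z = f x - q(x) x, which is orthogonal to x, raises the
  quadratic form q by 2e|z|^2 to first order, so z = 0.\<close>

lemma rayleigh_maximizer_is_eigenvector:
  fixes f :: "'a::real_inner \<Rightarrow> 'a"
  assumes "linear f" "self_adjoint f" "subspace S" "\<And>y. y \<in> S \<Longrightarrow> f y \<in> S"
    and "x \<in> S" "norm x = 1"
    and max: "\<And>y. y \<in> S \<Longrightarrow> inner y (f y) \<le> inner x (f x) * (norm y)\<^sup>2"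
  shows "f x = inner x (f x) *\<^sub>R x"
proof -
  define q where "q y = inner y (f y)" for y
  define z where "z = f x - q x *\<^sub>R x"
  have z_in_S: "z \<in> S"
    unfolding z_def using assms(3-5) by (simp add: subspace_diff subspace_scale)
  have xx: "inner x x = 1"
    using \<open>norm x = 1\<close> by (simp add: dot_square_norm)
  have zx: "inner z x = 0"
    using xx by (simp add: z_def q_def inner_diff_left inner_diff_right inner_commute)
  have zfx: "inner z (f x) = (norm z)\<^sup>2"
  proof -
    have "f x = z + q x *\<^sub>R x" by (simp add: z_def)
    then show ?thesis using zx by (simp add: inner_add_right power2_norm_eq_inner)
  qed
  have "e * (2 * (norm z)\<^sup>2) \<le> e\<^sup>2 * (q x * (norm z)\<^sup>2 - q z)" for e
  proof -
    have xfz: "inner x (f z) = (norm z)\<^sup>2"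
      using \<open>self_adjoint f\<close> zfx by (simp add: self_adjoint_def inner_commute)
    have "q (x + e *\<^sub>R z) \<le> q x * (norm (x + e *\<^sub>R z))\<^sup>2"
      unfolding q_def using assms(3,5) z_in_S by (intro max) (simp add: subspace_add subspace_scale)
    moreover have "q (x + e *\<^sub>R z) = q x + 2 * e * (norm z)\<^sup>2 + e\<^sup>2 * q z"
      using zfx xfz \<open>linear f\<close>
      by (simp add: q_def linear_add linear_scale inner_commute power2_eq_square algebra_simps)
    moreover have "(norm (x + e *\<^sub>R z))\<^sup>2 = 1 + e\<^sup>2 * (norm z)\<^sup>2"
      using zx \<open>norm x = 1\<close>
      by (simp add: norm_add_Pythagorean orthogonal_def inner_commute power_mult_distrib)
    ultimately show ?thesis by (simp add: algebra_simps)
  qed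
  then have "2 * (norm z)\<^sup>2 \<le> 0" by (rule nonpos_if_linear_le_quadratic)
  then have "z = 0" by simp
  then show ?thesis by (simp add: z_def q_def)
qed

lemma invariant_subspace_has_unit_eigenvector:
  fixes f :: "'a::euclidean_space \<Rightarrow> 'a"
  assumes "linear f" "self_adjoint f" "subspace S" "\<And>y. y \<in> S \<Longrightarrow> f y \<in> S" "S \<noteq> {0}"
  obtains x c where "x \<in> S" "norm x = 1" "f x = c *\<^sub>R x"
proof -
  define q where "q y = inner y (f y)" for y
  let ?T = "S \<inter> sphere 0 1"
  have "compact ?T"
    using closed_subspace[OF \<open>subspace S\<close>] by (simp add: closed_Int_compact)
  obtain y where "y \<in> S" "y \<noteq> 0" using assms(3,5) subspace_0 by blast
  then have "y /\<^sub>R norm y \<in> ?T" using \<open>subspace S\<close> by (auto simp: subspace_scale)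
  then have "?T \<noteq> {}" by blast
  moreover have "continuous_on ?T q"
    unfolding q_def using \<open>linear f\<close>
    by (intro continuous_intros linear_continuous_on) (simp add: linear_conv_bounded_linear)
  ultimately obtain x where x: "x \<in> ?T" and x_max: "\<And>y. y \<in> ?T \<Longrightarrow> q y \<le> q x"
    using continuous_attains_sup[OF \<open>compact ?T\<close>] by blast
  have "q y \<le> q x * (norm y)\<^sup>2" if "y \<in> S" for y
  proof (cases "y = 0")
    case True
    then show ?thesis by (simp add: q_def \<open>linear f\<close> linear_0)
  next
    case False
    have "q (y /\<^sub>R norm y) \<le> q x"
      using that False \<open>subspace S\<close> by (intro x_max) (auto simp: subspace_scale)
    then show ?thesis
      using \<open>linear f\<close> False by (simp add: q_def linear_scale power2_eq_square field_simps)
  qed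
  then have "f x = q x *\<^sub>R x"
    using rayleigh_maximizer_is_eigenvector[OF assms(1-4)] x unfolding q_def by auto
  then show ?thesis using x that by auto
qed

lemma self_adjoint_orthogonal_complement_invariant:
  assumes "self_adjoint f" "\<And>b. b \<in> B \<Longrightarrow> \<exists>c. f b = c *\<^sub>R b"
    and "y \<in> {y. \<forall>b\<in>B. orthogonal b y}"
  shows "f y \<in> {y. \<forall>b\<in>B. orthogonal b y}"
proof -
  have "inner b (f y) = 0" if "b \<in> B" for b
  proof -
    obtain c where "f b = c *\<^sub>R b" using assms(2) \<open>b \<in> B\<close> by blast
    then have "inner b (f y) = c * inner b y"
      using \<open>self_adjoint f\<close> by (metis self_adjoint_def inner_scaleR_left)
    then show ?thesis using assms(3) that by (simp add: orthogonal_def)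
  qed
  then show ?thesis by (simp add: orthogonal_def)
qed

lemma dim_orthogonal_complement_orthonormal:
  fixes B :: "'a::euclidean_space set"
  assumes "pairwise orthogonal B" "0 \<notin> B"
  shows "dim {y. \<forall>b\<in>B. orthogonal b y} + card B = DIM('a)"
proof -
  have "independent B" by (rule pairwise_orthogonal_independent[OF assms])
  have "{y \<in> UNIV. \<forall>x \<in> span B. orthogonal x y} = {y. \<forall>b\<in>B. orthogonal b y}"
    by (auto intro: span_base orthogonal_to_span simp: orthogonal_commute)
  moreover have "dim {y \<in> UNIV. \<forall>x \<in> span B. orthogonal x y} + dim (span B) = dim (UNIV :: 'a set)"
    by (rule dim_subspace_orthogonal_to_vectors) auto
  ultimately show ?thesis
    using dim_span_eq_card_independent[OF \<open>independent B\<close>] by simp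
qed

lemma self_adjoint_orthonormal_eigenvectors:
  fixes f :: "'a::euclidean_space \<Rightarrow> 'a"
  assumes "linear f" "self_adjoint f" "k \<le> DIM('a)"
  shows "\<exists>B. finite B \<and> card B = k \<and> pairwise orthogonal B \<and>
           (\<forall>b\<in>B. norm b = 1 \<and> (\<exists>c. f b = c *\<^sub>R b))"
  using \<open>k \<le> DIM('a)\<close>
proof (induction k)
  case 0
  show ?case by (intro exI[of _ "{}"]) auto
next
  case (Suc k)
  then obtain B where "finite B" "card B = k" "pairwise orthogonal B"
    and B_eigen: "\<forall>b\<in>B. norm b = 1 \<and> (\<exists>c. f b = c *\<^sub>R b)"
    by auto
  define S where "S = {y. \<forall>b\<in>B. orthogonal b y}"
  have "0 \<notin> B" using B_eigen by force
  then have "dim S + k = DIM('a)"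
    unfolding S_def using dim_orthogonal_complement_orthonormal \<open>pairwise orthogonal B\<close>
      \<open>card B = k\<close> by metis
  then have "S \<noteq> {0}" using Suc.prems by auto
  moreover have "subspace S" unfolding S_def by (rule subspace_orthogonal_to_vectors)
  moreover have "f y \<in> S" if "y \<in> S" for y
    using self_adjoint_orthogonal_complement_invariant[OF assms(2)] B_eigen that
    unfolding S_def by blast
  ultimately obtain x c where "x \<in> S" "norm x = 1" "f x = c *\<^sub>R x"
    using invariant_subspace_has_unit_eigenvector[OF assms(1,2)] by metis
  moreover have "x \<notin> B"
    using \<open>x \<in> S\<close> \<open>norm x = 1\<close> by (auto simp: S_def orthogonal_def)
  moreover have "pairwise orthogonal (insert x B)"
    using \<open>pairwise orthogonal B\<close> \<open>x \<in> S\<close>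
    by (auto simp: pairwise_insert S_def orthogonal_commute)
  ultimately show ?case
    using \<open>finite B\<close> \<open>card B = k\<close> B_eigen by (intro exI[of _ "insert x B"]) auto
qed

definition diag_matrix :: "('n::finite \<Rightarrow> 'a::semiring_1) \<Rightarrow> 'a^'n^'n" where
  "diag_matrix d = (\<chi> i j. if i = j then d i else 0)"

lemma matrix_mul_diag_matrix_entry: "(A ** diag_matrix d) $ i $ j = A $ i $ j * d j"
  by (simp add: matrix_matrix_mult_def diag_matrix_def if_distrib cong: if_cong)

lemma diag_matrix_mul: "diag_matrix d ** diag_matrix e = diag_matrix (\<lambda>i. d i * e i)"
  by (simp add: vec_eq_iff matrix_mul_diag_matrix_entry) (simp add: diag_matrix_def)

lemma diag_matrix_one: "diag_matrix (\<lambda>_. 1) = mat 1"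
  by (simp add: diag_matrix_def mat_def)

lemma matrix_mul_diag_matrix_mul_entry:
  "(A ** diag_matrix d ** B) $ j $ k = (\<Sum>i\<in>UNIV. A $ j $ i * d i * B $ i $ k)"
  by (subst matrix_matrix_mult_def) (simp add: matrix_mul_diag_matrix_entry)

lemma symmetric_matrix_orthogonal_diagonalization:
  fixes H :: "real^'n^'n"
  assumes "transpose H = H"
  obtains P l where "orthogonal_matrix P" "H = P ** diag_matrix l ** transpose P"
proof -
  have "self_adjoint ((*v) H)"
    using assms unfolding self_adjoint_def
    by (metis transpose_matrix_vector dot_lmul_matrix)
  then obtain B where "finite B" "card B = CARD('n)" "pairwise orthogonal B"
    and B_eigen: "\<forall>b\<in>B. norm b = 1 \<and> (\<exists>c. H *v b = c *\<^sub>R b)"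
    using self_adjoint_orthonormal_eigenvectors[of "(*v) H" "CARD('n)"] by auto
  obtain f where f: "bij_betw f (UNIV::'n set) B"
    using finite_same_card_bij[of "UNIV::'n set" B] \<open>finite B\<close> \<open>card B = CARD('n)\<close> by auto
  then have f_in_B: "f j \<in> B" for j by (auto simp: bij_betw_def)
  define l where "l j = (SOME c. H *v f j = c *\<^sub>R f j)" for j
  have l: "H *v f j = l j *\<^sub>R f j" for j
    unfolding l_def by (rule someI_ex) (use B_eigen f_in_B in blast)
  define P :: "real^'n^'n" where "P = (\<chi> i j. f j $ i)"
  have column_P: "column j P = f j" for j by (simp add: column_def P_def vec_eq_iff)
  have "orthogonal_matrix P"
    unfolding orthogonal_matrix_orthonormal_columns column_P
    using B_eigen f_in_B f \<open>pairwise orthogonal B\<close>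
    by (auto simp: bij_betw_def inj_on_def pairwise_def) blast
  have "H ** P = P ** diag_matrix l"
  proof -
    have "(H ** P) $ i $ k = (H *v f k) $ i" for i k
      by (simp add: matrix_matrix_mult_def matrix_vector_mult_def P_def)
    then show ?thesis by (simp add: vec_eq_iff matrix_mul_diag_matrix_entry l P_def mult.commute)
  qed
  then have "H = P ** diag_matrix l ** transpose P"
    using \<open>orthogonal_matrix P\<close>
    by (metis matrix_mul_assoc matrix_mul_rid orthogonal_matrix_def)
  with \<open>orthogonal_matrix P\<close> show ?thesis by (rule that)
qed

lemma mat_pow_diagonalizable:
  fixes Q R :: "'a::field^'n^'n"
  assumes "R ** Q = mat 1"
  shows "mat_pow (Q ** diag_matrix d ** R) m = Q ** diag_matrix (\<lambda>i. d i ^ m) ** R"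
proof (induction m)
  case 0
  show ?case using assms by (simp add: diag_matrix_one matrix_left_right_inverse)
next
  case (Suc m)
  have "mat_pow (Q ** diag_matrix d ** R) (Suc m)
      = Q ** diag_matrix d ** (R ** Q) ** diag_matrix (\<lambda>i. d i ^ m) ** R"
    by (simp add: Suc matrix_mul_assoc)
  also have "\<dots> = Q ** (diag_matrix d ** diag_matrix (\<lambda>i. d i ^ m)) ** R"
    by (simp add: assms matrix_mul_assoc)
  also have "\<dots> = Q ** diag_matrix (\<lambda>i. d i ^ Suc m) ** R"
    by (simp add: diag_matrix_mul)
  finally show ?case .
qed

lemma mat_exp_diagonalizable:
  fixes Q R :: "complex^'n^'n"
  assumes "R ** Q = mat 1"
  shows "mat_exp (Q ** diag_matrix d ** R) = Q ** diag_matrix (\<lambda>i. exp (d i)) ** R"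
proof -
  have "(\<lambda>m. mat_pow (Q ** diag_matrix d ** R) m $ j $ k / of_nat (fact m))
          sums (Q ** diag_matrix (\<lambda>i. exp (d i)) ** R) $ j $ k" for j k
  proof -
    have "(\<lambda>m. Q $ j $ i * (d i ^ m / of_nat (fact m)) * R $ i $ k)
            sums (Q $ j $ i * exp (d i) * R $ i $ k)" for i
      using exp_converges[of "d i"]
      by (intro sums_mult sums_mult2) (simp add: scaleR_conv_of_real divide_inverse mult.commute)
    then have "(\<lambda>m. \<Sum>i\<in>UNIV. Q $ j $ i * (d i ^ m / of_nat (fact m)) * R $ i $ k)
                 sums (\<Sum>i\<in>UNIV. Q $ j $ i * exp (d i) * R $ i $ k)"
      by (rule sums_sum)
    then show ?thesis
      by (simp add: mat_pow_diagonalizable[OF assms] matrix_mul_diag_matrix_mul_entry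
          sum_divide_distrib algebra_simps)
  qed
  then show ?thesis by (simp add: mat_exp_def vec_eq_iff sums_iff)
qed

lemma fidelity_orthogonal_diagonalization:
  fixes P :: "real^'n::finite^'n"
  assumes "orthogonal_matrix P" "H = P ** diag_matrix l ** transpose P"
  shows "fidelity H s r t
           = (cmod (\<Sum>i\<in>UNIV. of_real (P $ s $ i * P $ r $ i) * exp (\<i> * of_real (t * l i))))\<^sup>2"
proof -
  define Q :: "complex^'n^'n" where "Q = (\<chi> i j. of_real (P $ i $ j))"
  have "transpose Q ** Q = (\<chi> i j. of_real ((transpose P ** P) $ i $ j))"
    by (simp add: vec_eq_iff matrix_matrix_mult_def transpose_def Q_def)
  then have "transpose Q ** Q = mat 1"
    using assms(1) by (simp add: orthogonal_matrix_def vec_eq_iff mat_def)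
  moreover have "(\<chi> j k. \<i> * of_real t * of_real (H $ j $ k))
      = Q ** diag_matrix (\<lambda>i. \<i> * of_real (t * l i)) ** transpose Q"
    by (simp add: vec_eq_iff assms(2) matrix_mul_diag_matrix_mul_entry Q_def transpose_def
        sum_distrib_left algebra_simps)
  ultimately show ?thesis
    by (simp add: fidelity_def mat_exp_diagonalizable matrix_mul_diag_matrix_mul_entry Q_def
        transpose_def mult_ac)
qed

lemma orthogonal_matrix_row_sum_squares:
  fixes P :: "real^'n^'n"
  assumes "orthogonal_matrix P"
  shows "(\<Sum>i\<in>UNIV. (P $ j $ i)\<^sup>2) = 1"
proof -
  have "(P ** transpose P) $ j $ j = 1"
    using assms by (simp add: orthogonal_matrix_def mat_def)
  then show ?thesis by (simp add: matrix_matrix_mult_def transpose_def power2_eq_square)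
qed

text \<open>Equality in Cauchy-Schwarz: with \<omega> the overlap, \<Sum>_i |b_i z_i - a_i \<omega>|^2 = 2 - 2|\<omega>|^2 = 0.\<close>

lemma unit_overlap_aligned:
  fixes a b :: "'i \<Rightarrow> real" and z :: "'i \<Rightarrow> complex"
  assumes "finite A" "(\<Sum>i\<in>A. (a i)\<^sup>2) = 1" "(\<Sum>i\<in>A. (b i)\<^sup>2) = 1" "\<And>i. cmod (z i) = 1"
    and "cmod (\<Sum>i\<in>A. of_real (a i * b i) * z i) = 1"
  shows "\<forall>i\<in>A. b i * z i = a i * (\<Sum>i\<in>A. of_real (a i * b i) * z i)"
proof -
  define \<omega> where "\<omega> = (\<Sum>i\<in>A. of_real (a i * b i) * z i)"
  have zz: "z i * cnj (z i) = 1" for i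
    using complex_norm_square[of "z i"] assms(4) by simp
  have \<omega>\<omega>: "\<omega> * cnj \<omega> = 1"
    using complex_norm_square[of \<omega>] assms(5) by (simp add: \<omega>_def)
  have dist_sq: "(cmod (b i * z i - a i * \<omega>))\<^sup>2
      = (b i)\<^sup>2 + (a i)\<^sup>2 - 2 * (a i * b i) * Re (z i * cnj \<omega>)" for i
  proof -
    have "complex_of_real ((cmod (b i * z i - a i * \<omega>))\<^sup>2)
        = (b i * z i - a i * \<omega>) * cnj (b i * z i - a i * \<omega>)"
      by (rule complex_norm_square)
    also have "\<dots> = (b i)\<^sup>2 * (z i * cnj (z i)) + (a i)\<^sup>2 * (\<omega> * cnj \<omega>)
          - (a i * b i) * (z i * cnj \<omega> + cnj (z i * cnj \<omega>))"
      by (simp add: algebra_simps power2_eq_square)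
    also have "\<dots> = complex_of_real ((b i)\<^sup>2 + (a i)\<^sup>2 - 2 * (a i * b i) * Re (z i * cnj \<omega>))"
      by (simp only: zz \<omega>\<omega> complex_add_cnj) simp
    finally show ?thesis by (simp only: of_real_eq_iff)
  qed
  have "(\<Sum>i\<in>A. (a i * b i) * Re (z i * cnj \<omega>)) = Re (\<omega> * cnj \<omega>)"
    by (simp add: \<omega>_def Re_sum sum_distrib_right mult.assoc)
  then have overlap: "(\<Sum>i\<in>A. (a i * b i) * Re (z i * cnj \<omega>)) = 1"
    by (simp only: \<omega>\<omega>) simp
  have "(\<Sum>i\<in>A. (cmod (b i * z i - a i * \<omega>))\<^sup>2)
      = (\<Sum>i\<in>A. (b i)\<^sup>2) + (\<Sum>i\<in>A. (a i)\<^sup>2) - 2 * (\<Sum>i\<in>A. (a i * b i) * Re (z i * cnj \<omega>))"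
    by (simp only: dist_sq sum.distrib sum_subtractf sum_distrib_left mult.assoc)
  then have "(\<Sum>i\<in>A. (cmod (b i * z i - a i * \<omega>))\<^sup>2) = 0"
    using assms(2,3) overlap by simp
  then show ?thesis
    using \<open>finite A\<close> by (simp add: sum_nonneg_eq_0_iff \<omega>_def)
qed

lemma fidelity_after_perfect_transfer:
  fixes H :: "real^'n::finite^'n"
  assumes "transpose H = H" "fidelity H s r t0 = 1"
  shows "fidelity H s r (t0 + h) = fidelity H s s h"
proof -
  obtain P l where P: "orthogonal_matrix P" "H = P ** diag_matrix l ** transpose P"
    by (rule symmetric_matrix_orthogonal_diagonalization[OF assms(1)])
  define a where "a i = P $ s $ i" for i
  define b where "b i = P $ r $ i" for i
  define \<omega> where "\<omega> = (\<Sum>i\<in>UNIV. of_real (a i * b i) * exp (\<i> * of_real (t0 * l i)))"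
  have "cmod \<omega> = 1"
    using assms(2) fidelity_orthogonal_diagonalization[OF P, of s r t0]
    by (simp add: \<omega>_def a_def b_def power2_eq_1_iff) (smt (verit) norm_ge_zero)
  then have aligned: "b i * exp (\<i> * of_real (t0 * l i)) = a i * \<omega>" for i
    using unit_overlap_aligned[of UNIV a b "\<lambda>i. exp (\<i> * of_real (t0 * l i))"]
      orthogonal_matrix_row_sum_squares[OF P(1)]
    by (simp add: a_def b_def \<omega>_def)
  have "(\<Sum>i\<in>UNIV. of_real (a i * b i) * exp (\<i> * of_real ((t0 + h) * l i)))
      = (\<Sum>i\<in>UNIV. \<omega> * (of_real (a i * a i) * exp (\<i> * of_real (h * l i))))"
  proof (rule sum.cong[OF refl])
    fix i
    have "exp (\<i> * of_real ((t0 + h) * l i)) = exp (\<i> * of_real (t0 * l i)) * exp (\<i> * of_real (h * l i))"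
      by (simp add: distrib_right distrib_left exp_add)
    then show "of_real (a i * b i) * exp (\<i> * of_real ((t0 + h) * l i))
        = \<omega> * (of_real (a i * a i) * exp (\<i> * of_real (h * l i)))"
      using aligned[of i] by (simp add: algebra_simps)
  qed
  then show ?thesis
    using \<open>cmod \<omega> = 1\<close>
    by (simp add: fidelity_orthogonal_diagonalization[OF P] a_def b_def norm_mult
        flip: sum_distrib_left)
qed

lemma cos_ge_one_minus_square_half: "1 - x\<^sup>2 / 2 \<le> cos (x::real)"
proof -
  have "\<bar>sin (x / 2)\<bar> \<le> \<bar>x / 2\<bar>" by (rule abs_sin_x_le_abs_x)
  then have "(sin (x / 2))\<^sup>2 \<le> (x / 2)\<^sup>2" by (metis abs_le_square_iff)
  moreover have "cos x = 1 - 2 * (sin (x / 2))\<^sup>2"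
    using cos_double_sin[of "x / 2"] by simp
  ultimately show ?thesis by (simp add: power_divide)
qed

lemma weighted_variance_eq:
  fixes q \<theta> :: "'i \<Rightarrow> real"
  assumes "(\<Sum>i\<in>A. q i) = 1"
  shows "(\<Sum>i\<in>A. q i * (\<theta> i - (\<Sum>j\<in>A. q j * \<theta> j))\<^sup>2)
           = (\<Sum>i\<in>A. q i * (\<theta> i)\<^sup>2) - (\<Sum>i\<in>A. q i * \<theta> i)\<^sup>2"
proof -
  define \<mu> where "\<mu> = (\<Sum>j\<in>A. q j * \<theta> j)"
  have "(\<Sum>i\<in>A. q i * (\<theta> i - \<mu>)\<^sup>2)
      = (\<Sum>i\<in>A. q i * (\<theta> i)\<^sup>2 - 2 * \<mu> * (q i * \<theta> i) + \<mu>\<^sup>2 * q i)"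
    by (rule sum.cong) (simp_all add: power2_diff algebra_simps)
  also have "\<dots> = (\<Sum>i\<in>A. q i * (\<theta> i)\<^sup>2) - 2 * \<mu> * (\<Sum>i\<in>A. q i * \<theta> i) + \<mu>\<^sup>2 * (\<Sum>i\<in>A. q i)"
    by (simp add: sum.distrib sum_subtractf sum_distrib_left)
  finally show ?thesis
    using assms by (simp add: \<mu>_def power2_eq_square)
qed

lemma one_minus_le_square:
  fixes c v :: real
  assumes "1 - v / 2 \<le> c" "0 \<le> c"
  shows "1 - v \<le> c\<^sup>2"
proof (cases "0 \<le> 1 - v / 2")
  case True
  then have "(1 - v / 2)\<^sup>2 \<le> c\<^sup>2" using assms(1) by (simp add: power_mono)
  moreover have "(1 - v / 2)\<^sup>2 = 1 - v + (v / 2)\<^sup>2" by (simp add: power2_eq_square algebra_simps)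
  ultimately show ?thesis using zero_le_power2[of "v / 2"] by linarith
next
  case False
  then show ?thesis using zero_le_power2[of c] by linarith
qed

lemma norm_expectation_exp_i_ge:
  fixes q \<theta> :: "'i \<Rightarrow> real"
  assumes "\<And>i. i \<in> A \<Longrightarrow> 0 \<le> q i" "(\<Sum>i\<in>A. q i) = 1"
  shows "1 - ((\<Sum>i\<in>A. q i * (\<theta> i)\<^sup>2) - (\<Sum>i\<in>A. q i * \<theta> i)\<^sup>2)
           \<le> (cmod (\<Sum>i\<in>A. of_real (q i) * exp (\<i> * of_real (\<theta> i))))\<^sup>2"
proof -
  define \<mu> where "\<mu> = (\<Sum>i\<in>A. q i * \<theta> i)"
  define V where "V = (\<Sum>i\<in>A. q i * (\<theta> i)\<^sup>2) - \<mu>\<^sup>2"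
  define S where "S = (\<Sum>i\<in>A. of_real (q i) * exp (\<i> * of_real (\<theta> i)))"
  have "exp (\<i> * of_real (- \<mu>)) * S = (\<Sum>i\<in>A. of_real (q i) * exp (\<i> * of_real (\<theta> i - \<mu>)))"
    unfolding S_def sum_distrib_left
    by (rule sum.cong) (simp_all add: algebra_simps flip: exp_add)
  then have "Re (exp (\<i> * of_real (- \<mu>)) * S) = (\<Sum>i\<in>A. q i * cos (\<theta> i - \<mu>))"
    by (simp add: Re_exp)
  also have "\<dots> \<ge> (\<Sum>i\<in>A. q i * (1 - (\<theta> i - \<mu>)\<^sup>2 / 2))"
    using assms(1) by (intro sum_mono mult_left_mono cos_ge_one_minus_square_half) auto
  moreover have "(\<Sum>i\<in>A. q i * (1 - (\<theta> i - \<mu>)\<^sup>2 / 2))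
      = (\<Sum>i\<in>A. q i) - (\<Sum>i\<in>A. q i * (\<theta> i - \<mu>)\<^sup>2) / 2"
    by (simp add: right_diff_distrib sum_subtractf sum_divide_distrib)
  then have "(\<Sum>i\<in>A. q i * (1 - (\<theta> i - \<mu>)\<^sup>2 / 2)) = 1 - V / 2"
    using weighted_variance_eq[OF assms(2), of \<theta>] assms(2) by (simp add: V_def \<mu>_def)
  moreover have "Re (exp (\<i> * of_real (- \<mu>)) * S) \<le> cmod S"
    using complex_Re_le_cmod[of "exp (\<i> * of_real (- \<mu>)) * S"]
    by (simp only: norm_mult norm_exp_i_times mult_1)
  ultimately have "1 - V / 2 \<le> cmod S" by linarith
  then have "1 - V \<le> (cmod S)\<^sup>2"
    using norm_ge_zero by (rule one_minus_le_square)
  then show ?thesis by (simp add: V_def \<mu>_def S_def)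
qed

lemma fidelity_return_ge:
  fixes H :: "real^'n::finite^'n"
  assumes "transpose H = H"
  shows "1 - h\<^sup>2 * ((H ** H) $ s $ s - (H $ s $ s)\<^sup>2) \<le> fidelity H s s h"
proof -
  obtain P l where P: "orthogonal_matrix P" "H = P ** diag_matrix l ** transpose P"
    by (rule symmetric_matrix_orthogonal_diagonalization[OF assms])
  define q where "q i = (P $ s $ i)\<^sup>2" for i
  have H_squared: "H ** H = P ** diag_matrix (\<lambda>i. l i ^ 2) ** transpose P"
    using mat_pow_diagonalizable[of "transpose P" P l 2] P
    by (simp add: orthogonal_matrix_def numeral_2_eq_2)
  have "(H ** H) $ s $ s = (\<Sum>i\<in>UNIV. q i * (l i)\<^sup>2)"
    unfolding H_squared matrix_mul_diag_matrix_mul_entry q_def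
    by (rule sum.cong) (simp_all add: transpose_def power2_eq_square)
  moreover have "H $ s $ s = (\<Sum>i\<in>UNIV. q i * l i)"
    unfolding P(2) matrix_mul_diag_matrix_mul_entry q_def
    by (rule sum.cong) (simp_all add: transpose_def power2_eq_square)
  ultimately have variance: "(H ** H) $ s $ s - (H $ s $ s)\<^sup>2
      = (\<Sum>i\<in>UNIV. q i * (l i)\<^sup>2) - (\<Sum>i\<in>UNIV. q i * l i)\<^sup>2"
    by simp
  have scaled: "(\<Sum>i\<in>UNIV. q i * (h * l i)\<^sup>2) = h\<^sup>2 * (\<Sum>i\<in>UNIV. q i * (l i)\<^sup>2)"
    "(\<Sum>i\<in>UNIV. q i * (h * l i)) = h * (\<Sum>i\<in>UNIV. q i * l i)"
    by (simp_all add: power_mult_distrib sum_distrib_left mult_ac)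
  have "h\<^sup>2 * ((H ** H) $ s $ s - (H $ s $ s)\<^sup>2)
      = (\<Sum>i\<in>UNIV. q i * (h * l i)\<^sup>2) - (\<Sum>i\<in>UNIV. q i * (h * l i))\<^sup>2"
    unfolding variance scaled by (simp add: power_mult_distrib right_diff_distrib)
  moreover have "1 - ((\<Sum>i\<in>UNIV. q i * (h * l i)\<^sup>2) - (\<Sum>i\<in>UNIV. q i * (h * l i))\<^sup>2)
      \<le> (cmod (\<Sum>i\<in>UNIV. of_real (q i) * exp (\<i> * of_real (h * l i))))\<^sup>2"
    using orthogonal_matrix_row_sum_squares[OF P(1)]
    by (intro norm_expectation_exp_i_ge) (simp_all add: q_def)
  moreover have "fidelity H s s h
      = (cmod (\<Sum>i\<in>UNIV. of_real (q i) * exp (\<i> * of_real (h * l i))))\<^sup>2"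
    by (simp only: fidelity_orthogonal_diagonalization[OF P] q_def power2_eq_square)
  ultimately show ?thesis by linarith
qed

lemma graph_matrix_symmetric:
  assumes "weighted_graph E w" "H = adjacency_matrix E w \<or> H = laplacian_matrix E w"
  shows "transpose H = H"
proof -
  have "adjacency_matrix E w $ i $ j = adjacency_matrix E w $ j $ i" for i j
    using assms(1) by (auto simp: adjacency_matrix_def weighted_graph_def)
  then show ?thesis
    using assms(2) by (auto simp: vec_eq_iff transpose_def laplacian_matrix_def)
qed

theorem corollary2p3:
  fixes E :: "'n::finite \<Rightarrow> 'n \<Rightarrow> bool" and w :: "'n \<Rightarrow> 'n \<Rightarrow> real"
    and H :: "real ^'n ^'n" and s r :: 'n and t0 h :: real
  assumes "weighted_graph E w" and "connected_graph E"
    and "H = adjacency_matrix E w \<or> H = laplacian_matrix E w"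
    and "fidelity H s r t0 = 1"
    and "\<bar>h\<bar> < pi / (Max (eigenvalues H) - Min (eigenvalues H))"
  shows "fidelity H s r (t0 + h) \<ge> 1 - h\<^sup>2 * ((H ** H) $ s $ s - (H $ s $ s)\<^sup>2)"
proof -
  have "transpose H = H" using assms(1,3) by (rule graph_matrix_symmetric)
  then have "fidelity H s r (t0 + h) = fidelity H s s h"
    using assms(4) by (rule fidelity_after_perfect_transfer)
  also have "\<dots> \<ge> 1 - h\<^sup>2 * ((H ** H) $ s $ s - (H $ s $ s)\<^sup>2)"
    using \<open>transpose H = H\<close> by (rule fidelity_return_ge)
  finally show ?thesis .
qed

end
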